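(* Let $m\geq1$ and let $\Delta$ be the triangle with vertices $(-\alpha,0)$, $(m-1+\beta,0)$, $(m,m+1)$, where $\alpha,\beta$ are rational with $0<\alpha<\frac{1}{1+(m+1)+(m+1)^2}$ and $\frac{1}{m+2}<\beta<1-\frac{1}{1+\frac{1}{m+1}+\frac{1}{(m+1)^2}-\frac{\alpha}{1-(m+2)\alpha}}$. With $C$, $D$ and $HC_k$ as in the context, $m\notin HC_k$.
   Context: Let $k$ be an algebraically closed field of characteristic zero, $t_0=(1,1)$. For a rational triangle $\Delta$, $X_\Delta$ is the projective toric surface defined by $\Delta$ (containing the torus $T$ with coordinates $x,y$), $\pi:X=\mathrm{Bl}_{t_0}X_\Delta\to X_\Delta$ the blowup with exceptional curve $E$. Divisor classes on $X_\Delta$ correspond to rational triangles with sides parallel to those of $\Delta$ (each side's line containing a lattice point), up to integral translation, and global sections of the corresponding sheaf are Laurent polynomials with Newton polygon in that triangle. $\xi_m\in\mathbb{Z}[x,y]$ is the polynomial $(-1)^mx^my^{m+1}+\sum_{j=0}^{m-1}\sum_{i=j}^{m-1}(-1)^j\binom{m+1}{j}x^iy^j$. $C\subset X$ is the strict transform of $\{\xi_m=0\}$. $D$ is the class $\pi^*H'-(m+1)E$, where $H'$ corresponds to the triangle with sides parallel to those of $\Delta$ and base the interval $[0,m]$ on the $x$-axis. For a global section $s$ of $\mathcal{O}_X(lD)$ given by a rational function $f$, $V(s)$ is the support of $\mathrm{div}(f)+lD$. $HC_k=\{l\in\mathbb{Z}_{>0}:\mathcal{O}_X(lD)\text{ has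 a global section }\zeta\text{ with }C\cap V(\zeta)=\emptyset\}$. Equivalently, $l\in HC_k$ iff there is a Laurent polynomial $\zeta\in k[x^{\pm1},y^{\pm1}]$ whose Newton polygon lies in the triangle with sides parallel to those of $\Delta$ and base $[0,lm]$ on the $x$-axis, vanishing to order $l(m+1)$ at $t_0$, with nonzero constant term. *)

theory Defs
  imports "HOL-Computational_Algebra.Polynomial"
begin

text \<open>A Laurent polynomial in k[x^{+-1},y^{+-1}] is represented by its coefficient
  function c :: int \<times> int \<Rightarrow> 'k (c (i,j) is the coefficient of x^i y^j) with finite support.\<close>

definition laurent_poly :: "(int \<times> int \<Rightarrow> 'k::zero) \<Rightarrow> bool" where
  "laurent_poly c \<longleftrightarrow> finite {p. c p \<noteq> 0}"

definition lsupp :: "(int \<times> int \<Rightarrow> 'k::zero) \<Rightarrow> (int \<times> int) set" where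
  "lsupp c = {p. c p \<noteq> 0}"

text \<open>The (closed) triangle with sides parallel to those of the triangle Delta with vertices
  (-alpha,0), (m-1+beta,0), (m,m+1), and base the interval [0,L] on the x-axis.
  Its left side is the line through (0,0) with direction (m+alpha, m+1),
  its right side the line through (L,0) with direction (1-beta, m+1) (up to orientation).\<close>

definition tri :: "rat \<Rightarrow> rat \<Rightarrow> nat \<Rightarrow> nat \<Rightarrow> rat \<times> rat \<Rightarrow> bool" where
  "tri \<alpha> \<beta> m L = (\<lambda>(u, v). 0 \<le> v \<and>
       (of_nat m + \<alpha>) * v \<le> (of_nat m + 1) * u \<and>
       (of_nat m + 1) * (u - of_nat L) \<le> (1 - \<beta>) * v)"

text \<open>Newton polygon (convex hull of the support) lies in the (convex) triangle iff
  every exponent of the support does.\<close>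

definition newton_in_tri :: "rat \<Rightarrow> rat \<Rightarrow> nat \<Rightarrow> nat \<Rightarrow> (int \<times> int \<Rightarrow> 'k::zero) \<Rightarrow> bool" where
  "newton_in_tri \<alpha> \<beta> m L c \<longleftrightarrow>
     (\<forall>(i, j) \<in> lsupp c. tri \<alpha> \<beta> m L (of_int i, of_int j))"

text \<open>Vanishing to order at least N at t0 = (1,1): all Taylor coefficients at (1,1) of total
  degree < N vanish.  Writing x = 1+u, y = 1+v, the coefficient of u^a v^b in x^i y^j is
  (i gchoose a)(j gchoose b) (valid for all integers i, j).\<close>

definition vanishes_to_order_at_t0 :: "(int \<times> int \<Rightarrow> 'k::field_char_0) \<Rightarrow> nat \<Rightarrow> bool" where
  "vanishes_to_order_at_t0 c N \<longleftrightarrow>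
     (\<forall>a b. a + b < N \<longrightarrow>
        (\<Sum>(i, j) \<in> lsupp c. c (i, j) * ((of_int i :: 'k) gchoose a) * ((of_int j :: 'k) gchoose b)) = 0)"

definition HC :: "'k::field_char_0 itself \<Rightarrow> rat \<Rightarrow> rat \<Rightarrow> nat \<Rightarrow> nat set" where
  "HC _ \<alpha> \<beta> m = {l. 0 < l \<and>
     (\<exists>c :: int \<times> int \<Rightarrow> 'k. laurent_poly c \<and> newton_in_tri \<alpha> \<beta> m (l * m) c \<and>
        vanishes_to_order_at_t0 c (l * (m + 1)) \<and> c (0, 0) \<noteq> 0)}"

definition alg_closed_type :: "'k::field itself \<Rightarrow> bool" where
  "alg_closed_type _ \<longleftrightarrow> (\<forall>p :: 'k poly. 0 < degree p \<longrightarrow> (\<exists>x. poly p x = 0))"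

end

theory Submission
  imports Defs
begin

text \<open>Since \<open>\<alpha> > 0\<close> and \<open>\<beta> > 1/(m+2)\<close>, every lattice point of the triangle with base
  \<open>[0, m\<^sup>2]\<close> other than the origin has first coordinate \<open>i\<close> in \<open>[1, m(m+1) - 1]\<close>.
  Vanishing to order \<open>m(m+1)\<close> at \<open>(1,1)\<close> kills in particular the "moments"
  \<open>\<Sum> c(i,j) (i gchoose a)\<close> for \<open>a < m(m+1)\<close>; an alternating combination of them is
  \<open>\<Sum> c(i,j) ((i-1) gchoose n)\<close> with \<open>n = m(m+1) - 1\<close>, and in this sum every monomial
  except the constant one drops out, leaving \<open>\<plusminus>c(0,0) = 0\<close>.\<close>

lemma tri_lattice_left_side:
  fixes i j :: int and \<alpha> \<beta> :: rat
  assumes "0 < \<alpha>" and "tri \<alpha> \<beta> m L (of_int i, of_int j)"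
  shows "0 \<le> j" and "0 \<le> i" and "0 < j \<longrightarrow> int m * j < (int m + 1) * i"
proof -
  have j: "0 \<le> (of_int j :: rat)"
    and left: "(of_nat m + \<alpha>) * of_int j \<le> (of_nat m + 1) * (of_int i :: rat)"
    using assms(2) by (auto simp: tri_def)
  then show "0 \<le> j" by simp
  have "0 \<le> (of_nat m + \<alpha>) * (of_int j :: rat)"
    using j assms(1) by simp
  with left have "0 \<le> (of_nat m + 1) * (of_int i :: rat)" by linarith
  then show "0 \<le> i" by (simp add: zero_le_mult_iff)
  show "0 < j \<longrightarrow> int m * j < (int m + 1) * i"
  proof
    assume "0 < j"
    then have "of_nat m * (of_int j :: rat) < (of_nat m + \<alpha>) * of_int j"
      using assms(1) by (simp add: distrib_right)
    with left have "of_int (int m * j) < (of_int ((int m + 1) * i) :: rat)" by simp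
    then show "int m * j < (int m + 1) * i" by linarith
  qed
qed

lemma tri_lattice_right_side:
  fixes i j :: int and \<alpha> \<beta> :: rat
  assumes "1 / (of_nat m + 2) < \<beta>" and "tri \<alpha> \<beta> m L (of_int i, of_int j)"
    and "int L < i"
  shows "(int m + 2) * (i - int L) < j"
proof -
  have j: "0 \<le> (of_int j :: rat)"
    and right: "(of_nat m + 1) * (of_int i - of_nat L) \<le> (1 - \<beta>) * (of_int j :: rat)"
    using assms(2) by (auto simp: tri_def)
  have "0 < (of_nat m + 1) * (of_int i - (of_nat L :: rat))"
    using assms(3) by (simp add: of_nat_less_of_int_iff)
  with right have "0 < (1 - \<beta>) * (of_int j :: rat)" by linarith
  then have "(of_int j :: rat) \<noteq> 0" by auto
  with j have "0 < (of_int j :: rat)" by linarith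
  moreover have "1 - \<beta> < (of_nat m + 1) / (of_nat m + 2)"
    using assms(1) by (simp add: field_simps)
  ultimately have "(1 - \<beta>) * of_int j < (of_nat m + 1) / (of_nat m + 2) * (of_int j :: rat)"
    by (intro mult_strict_right_mono)
  with right have "(of_nat m + 1) * (of_int i - of_nat L)
      < (of_nat m + 1) / (of_nat m + 2) * (of_int j :: rat)" by linarith
  then have "(of_nat m + 1) * ((of_nat m + 2) * (of_int i - of_nat L))
      < (of_nat m + 1) * (of_int j :: rat)"
    by (simp add: field_simps)
  then have "of_int ((int m + 2) * (i - int L)) < (of_int j :: rat)"
    by (simp add: mult_less_cancel_left_pos)
  then show ?thesis by linarith
qed

lemma first_coordinate_bound:
  fixes i j :: int
  assumes "1 \<le> m" and "int m * j < (int m + 1) * i"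
    and "(int m + 2) * (i - int m * int m) < j"
  shows "i < int m * (int m + 1)"
proof (rule ccontr)
  assume "\<not> ?thesis"
  define k where "k = i - int m * (int m + 1)"
  with \<open>\<not> ?thesis\<close> have k: "0 \<le> k" "i = int m * int m + int m + k"
    by (simp_all add: algebra_simps)
  have "int m * ((int m + 2) * (i - int m * int m) + 1) \<le> int m * j"
    using assms(3) by (intro mult_left_mono) auto
  with assms(2) have "k * (int m * int m + int m - 1) + 1 \<le> 0"
    unfolding k(2) by (simp add: algebra_simps)
  moreover have "0 \<le> int m * int m + int m - 1"
    using assms(1) by (simp add: add_pos_nonneg)
  with k(1) have "0 \<le> k * (int m * int m + int m - 1)" by simp
  ultimately show False by linarith
qed

lemma tri_lattice_points:
  fixes i j :: int and \<alpha> \<beta> :: rat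
  assumes "1 \<le> m" and "0 < \<alpha>" and "1 / (of_nat m + 2) < \<beta>"
    and "tri \<alpha> \<beta> m (m * m) (of_int i, of_int j)"
  shows "(i, j) = (0, 0) \<or> 1 \<le> i \<and> i < int m * (int m + 1)"
proof -
  note left = tri_lattice_left_side[OF assms(2,4)]
  have "i < int m * (int m + 1)"
  proof (cases "i \<le> int (m * m)")
    case True
    then show ?thesis using assms(1) by (simp add: algebra_simps)
  next
    case False
    then have "(int m + 2) * (i - int m * int m) < j"
      using tri_lattice_right_side[OF assms(3,4)] by simp
    moreover from False have "0 < (int m + 2) * (i - int m * int m)" by simp
    ultimately have "0 < j" by linarith
    with left(3) first_coordinate_bound[OF assms(1)] \<open>(int m + 2) * (i - int m * int m) < j\<close>
    show ?thesis by blast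
  qed
  moreover have "j = 0" if "i = 0"
  proof (rule ccontr)
    assume "j \<noteq> 0"
    with left(1,3) that have "int m * j < 0" by simp
    with left(1) show False by (simp add: mult_less_0_iff)
  qed
  ultimately show ?thesis using left(2) by auto
qed

lemma vanishes_to_order_at_t0_moment:
  fixes c :: "int \<times> int \<Rightarrow> 'k::field_char_0"
  assumes "vanishes_to_order_at_t0 c N" and "a < N"
  shows "(\<Sum>(i, j) \<in> lsupp c. c (i, j) * (of_int i gchoose a)) = 0"
  using assms(1)[unfolded vanishes_to_order_at_t0_def, rule_format, of a 0] assms(2) by simp

lemma vanishes_to_order_at_t0_shifted_moment:
  fixes c :: "int \<times> int \<Rightarrow> 'k::field_char_0"
  assumes "vanishes_to_order_at_t0 c N" and "n < N"
  shows "(\<Sum>(i, j) \<in> lsupp c. c (i, j) * ((of_int i - 1) gchoose n)) = 0"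
proof -
  have "(-1) ^ n * (\<Sum>(i, j) \<in> lsupp c. c (i, j) * ((of_int i - 1) gchoose n))
      = (\<Sum>(i, j) \<in> lsupp c. c (i, j) * (\<Sum>a\<le>n. (of_int i gchoose a) * (-1) ^ a))"
    by (simp add: gbinomial_sum_lower_neg sum_distrib_left case_prod_beta mult.left_commute)
  also have "\<dots> = (\<Sum>a\<le>n. (-1) ^ a * (\<Sum>(i, j) \<in> lsupp c. c (i, j) * (of_int i gchoose a)))"
    by (simp add: sum_distrib_left case_prod_beta sum.swap[where B = "{..n}"] ac_simps)
  also have "\<dots> = 0"
    using vanishes_to_order_at_t0_moment[OF assms(1)] assms(2) by simp
  finally show ?thesis by simp
qed

lemma gbinomial_of_nat_less_eq_0:
  "k < n \<Longrightarrow> (of_nat k :: 'a::field_char_0) gchoose n = 0"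
  by (simp add: binomial_gbinomial[symmetric])

lemma gbinomial_minus_one: "((-1 :: 'a::field_char_0) gchoose n) = (-1) ^ n"
  using gbinomial_minus[of "1 :: 'a" n] by (simp add: binomial_gbinomial[symmetric])

theorem lemma5p7:
  fixes m :: nat and \<alpha> \<beta> :: rat
  assumes "alg_closed_type TYPE('k::field_char_0)"
    and "1 \<le> m"
    and "0 < \<alpha>"
    and "\<alpha> < 1 / (1 + (of_nat m + 1) + (of_nat m + 1)^2)"
    and "1 / (of_nat m + 2) < \<beta>"
    and "\<beta> < 1 - 1 / (1 + 1 / (of_nat m + 1) + 1 / (of_nat m + 1)^2
                       - \<alpha> / (1 - (of_nat m + 2) * \<alpha>))"
  shows "m \<notin> HC TYPE('k) \<alpha> \<beta> m"
proof
  assume "m \<in> HC TYPE('k) \<alpha> \<beta> m"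
  then obtain c :: "int \<times> int \<Rightarrow> 'k" where "laurent_poly c"
    and newton: "newton_in_tri \<alpha> \<beta> m (m * m) c"
    and vanish: "vanishes_to_order_at_t0 c (m * (m + 1))" and "c (0, 0) \<noteq> 0"
    unfolding HC_def by auto
  define n where "n = m * (m + 1) - 1"
  have n: "int n = int m * (int m + 1) - 1"
    using assms(2) by (simp add: n_def of_nat_diff algebra_simps)
  have "finite (lsupp c)" and "(0, 0) \<in> lsupp c"
    using \<open>laurent_poly c\<close> \<open>c (0, 0) \<noteq> 0\<close> by (auto simp: laurent_poly_def lsupp_def)
  have off_origin: "(\<lambda>(i, j). c (i, j) * ((of_int i - 1) gchoose n)) p = 0"
    if "p \<in> lsupp c - {(0, 0)}" for p
  proof -
    obtain i j where p: "p = (i, j)" by fastforce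
    with that newton have "1 \<le> i \<and> i < int m * (int m + 1)"
      using tri_lattice_points[OF assms(2,3,5)] by (fastforce simp: newton_in_tri_def)
    then have "(of_int i - 1 :: 'k) = of_nat (nat (i - 1))" and "nat (i - 1) < n"
      by (simp_all add: of_nat_nat nat_less_iff n)
    then show ?thesis using p by (simp add: gbinomial_of_nat_less_eq_0)
  qed
  have "n < m * (m + 1)" using assms(2) by (simp add: n_def)
  then have "0 = (\<Sum>(i, j) \<in> lsupp c. c (i, j) * ((of_int i - 1) gchoose n))"
    using vanishes_to_order_at_t0_shifted_moment[OF vanish] by simp
  also have "\<dots> = c (0, 0) * ((-1) gchoose n)
      + (\<Sum>p \<in> lsupp c - {(0, 0)}. (\<lambda>(i, j). c (i, j) * ((of_int i - 1) gchoose n)) p)"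
    unfolding sum.remove[OF \<open>finite (lsupp c)\<close> \<open>(0, 0) \<in> lsupp c\<close>] by simp
  also have "\<dots> = c (0, 0) * (-1) ^ n"
    using off_origin by (simp add: gbinomial_minus_one)
  finally show False using \<open>c (0, 0) \<noteq> 0\<close> by simp
qed

end
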